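(* Let $\vec{\alpha}=\langle\alpha_s:s\in[\mathbb{N}]^{<\infty}\rangle$ be a sequence of nonstandard hypernatural numbers. Suppose $H\subseteq[\mathbb{N}]^{<\infty}$ satisfies $s\cup\{\alpha_s\}\in{}^*H$ for all $s\in H$. Then for every $\vec{\alpha}$-tree $T$ with $st(T)\in H$ there exists an $\vec{\alpha}$-tree $S\subseteq T$ with $st(S)=st(T)$ such that $S/st(S)\subseteq H$.
   Context: Setting (Alpha-Theory of Benci–Di Nasso): ZFC together with a new symbol $\alpha$ satisfying: ($\alpha$1) every sequence $\varphi=\langle\varphi_i:i\in\mathbb{N}\rangle$ has a unique ideal value $\varphi[\alpha]$; ($\alpha$2) if $\varphi[\alpha]=\psi[\alpha]$ and $f\circ\varphi$, $f\circ\psi$ make sense then $(f\circ\varphi)[\alpha]=(f\circ\psi)[\alpha]$; ($\alpha$3) constant real sequences $r$ have ideal value $r$, and $\langle i\rangle$ has ideal value $\alpha\notin\mathbb{N}$; ($\alpha$4) if $\vartheta_i=\{\varphi_i,\psi_i\}$ then $\vartheta[\alpha]=\{\varphi[\alpha],\psi[\alpha]\}$; ($\alpha$5) the constant sequence $\emptyset$ has ideal value $\emptyset$, and for nonempty $\psi_i$, $\psi[\alpha]=\{\vartheta[\alpha]:\vartheta_i\in\psi_i\ \forall i\}$. ${}^*A$ is the ideal value of the constant sequence $A$; elements of ${}^*\mathbb{N}\setminus\mathbb{N}$ are nonstandard hypernatural numbers. For finite $s,t\subseteq\mathbb{N}$, $s\sqsubseteq t$ means $s=\{j\in t:j\le i\}$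 for some $i$. A tree on $\mathbb{N}$ is a nonempty $T\subseteq[\mathbb{N}]^{<\infty}$ closed under $\sqsubseteq$-initial segments; stem $st(T)$ = $\sqsubseteq$-maximal $s\in T$ comparable with all elements of $T$ (if it exists); $T/s=\{t\in T:s\sqsubseteq t\}$. An $\vec{\alpha}$-tree is a tree $T$ with a stem, $T/st(T)\neq\emptyset$, and $s\cup\{\alpha_s\}\in{}^*T$ for all $s\in T/st(T)$. *)

theory Defs
  imports Main
begin

text \<open>Alpha-Theory is modelled by its standard (ultrapower) semantics: the numerosity
  alpha determines the nonprincipal ultrafilter U = {X. alpha in *X} on the naturals,
  a hypernatural is the ideal value phi[alpha] of a sequence phi :: nat => nat, and
  phi[alpha] = psi[alpha] iff {i. phi i = psi i} is in U.\<close>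

definition nonprincipal_uf :: "nat set set \<Rightarrow> bool" where
  "nonprincipal_uf U \<longleftrightarrow>
     UNIV \<in> U \<and> {} \<notin> U \<and>
     (\<forall>X Y. X \<in> U \<and> X \<subseteq> Y \<longrightarrow> Y \<in> U) \<and>
     (\<forall>X Y. X \<in> U \<and> Y \<in> U \<longrightarrow> X \<inter> Y \<in> U) \<and>
     (\<forall>X. X \<in> U \<or> - X \<in> U) \<and>
     (\<forall>n. {n} \<notin> U)"

definition nonstandard :: "nat set set \<Rightarrow> (nat \<Rightarrow> nat) \<Rightarrow> bool" where
  "nonstandard U \<phi> \<longleftrightarrow> (\<forall>n. {i. \<phi> i = n} \<notin> U)"

text \<open>For a standard finite set s and A a set of finite sets:
  s \<union> {phi[alpha]} \<in> *A.  By (alpha5), *A consists of ideal values of sequences in A,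
  and s \<union> {phi[alpha]} is the ideal value of the sequence i |-> s \<union> {phi i}.\<close>
definition ext_in_star :: "nat set set \<Rightarrow> (nat \<Rightarrow> nat) \<Rightarrow> nat set \<Rightarrow> nat set set \<Rightarrow> bool" where
  "ext_in_star U \<phi> s A \<longleftrightarrow> {i. s \<union> {\<phi> i} \<in> A} \<in> U"

definition init_seg :: "nat set \<Rightarrow> nat set \<Rightarrow> bool" where
  "init_seg s t \<longleftrightarrow> (\<exists>i. s = {j \<in> t. j \<le> i})"

definition is_tree :: "nat set set \<Rightarrow> bool" where
  "is_tree T \<longleftrightarrow> T \<noteq> {} \<and> (\<forall>t\<in>T. finite t) \<and> (\<forall>t\<in>T. \<forall>s. init_seg s t \<longrightarrow> s \<in> T)"

definition comparable_all :: "nat set set \<Rightarrow> nat set \<Rightarrow> bool" where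
  "comparable_all T s \<longleftrightarrow> (\<forall>t\<in>T. init_seg s t \<or> init_seg t s)"

definition is_stem :: "nat set set \<Rightarrow> nat set \<Rightarrow> bool" where
  "is_stem T s \<longleftrightarrow> s \<in> T \<and> comparable_all T s \<and>
     (\<forall>u\<in>T. comparable_all T u \<and> init_seg s u \<longrightarrow> u = s)"

definition has_stem :: "nat set set \<Rightarrow> bool" where
  "has_stem T \<longleftrightarrow> (\<exists>s. is_stem T s)"

definition stem :: "nat set set \<Rightarrow> nat set" where
  "stem T = (THE s. is_stem T s)"

definition tree_above :: "nat set set \<Rightarrow> nat set \<Rightarrow> nat set set" where
  "tree_above T s = {t \<in> T. init_seg s t}"

text \<open>alpha-tree for the sequence alpha (alpha s is a representative of alpha_s).\<close>
definition alpha_tree :: "nat set set \<Rightarrow> (nat set \<Rightarrow> nat \<Rightarrow> nat) \<Rightarrow> nat set set \<Rightarrow> bool" where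
  "alpha_tree U \<alpha> T \<longleftrightarrow> is_tree T \<and> has_stem T \<and> tree_above T (stem T) \<noteq> {} \<and>
     (\<forall>s\<in>tree_above T (stem T). ext_in_star U (\<alpha> s) s T)"

end

theory Submission
  imports Defs
begin

(* Prune T above its stem r to the nodes t all of whose initial segments between r and t
   lie in H. Every node of the pruned tree above r is in H, and such a node s inherits from T
   and H ultrafilter-many one-point extensions s \<union> {alpha_s i}; since alpha_s is nonstandard,
   almost all of them add a new maximum and so are again nodes of the pruned tree. The same
   abundance of immediate successors of r shows that r is still the stem. *)

lemma init_seg_subset: "init_seg s t \<Longrightarrow> s \<subseteq> t"
  by (auto simp: init_seg_def)

lemma init_seg_refl: "finite t \<Longrightarrow> init_seg t t"
  unfolding init_seg_def by (rule exI[of _ "Max (insert 0 t)"]) auto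

lemma init_seg_antisym: "init_seg s t \<Longrightarrow> init_seg t s \<Longrightarrow> s = t"
  using init_seg_subset by blast

lemma init_seg_trans: "init_seg s t \<Longrightarrow> init_seg t u \<Longrightarrow> init_seg s u"
proof -
  assume "init_seg s t" "init_seg t u"
  then obtain i k where "s = {j\<in>t. j \<le> i}" "t = {j\<in>u. j \<le> k}" by (auto simp: init_seg_def)
  then have "s = {j\<in>u. j \<le> min i k}" by auto
  then show ?thesis unfolding init_seg_def by blast
qed

lemma init_seg_linear: "init_seg s t \<Longrightarrow> init_seg s' t \<Longrightarrow> init_seg s s' \<or> init_seg s' s"
proof -
  assume "init_seg s t" "init_seg s' t"
  then obtain i k where s: "s = {j\<in>t. j \<le> i}" and s': "s' = {j\<in>t. j \<le> k}"
    by (auto simp: init_seg_def)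
  show ?thesis
  proof (cases "i \<le> k")
    case True
    then have "s = {j\<in>s'. j \<le> i}" using s s' by auto
    then show ?thesis by (auto simp: init_seg_def)
  next
    case False
    then have "s' = {j\<in>s. j \<le> k}" using s s' by auto
    then show ?thesis by (auto simp: init_seg_def)
  qed
qed

lemma init_seg_insert: "\<forall>j\<in>s. j < x \<Longrightarrow> 0 < x \<Longrightarrow> init_seg s (insert x s)"
  unfolding init_seg_def by (rule exI[of _ "x - 1"]) auto

lemma init_seg_insertD:
  assumes "\<forall>j\<in>s. j < x" "init_seg u (insert x s)"
  shows "init_seg u s \<or> u = insert x s"
proof -
  obtain i where u: "u = {j \<in> insert x s. j \<le> i}" using assms(2) by (auto simp: init_seg_def)
  show ?thesis
  proof (cases "i < x")
    case True
    then have "u = {j\<in>s. j \<le> i}" using u by auto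
    then show ?thesis by (auto simp: init_seg_def)
  next
    case False
    then show ?thesis using u assms(1) by fastforce
  qed
qed

lemma uf_Int: "nonprincipal_uf U \<Longrightarrow> X \<in> U \<Longrightarrow> Y \<in> U \<Longrightarrow> X \<inter> Y \<in> U"
  by (simp add: nonprincipal_uf_def)

lemma uf_mono: "nonprincipal_uf U \<Longrightarrow> X \<in> U \<Longrightarrow> X \<subseteq> Y \<Longrightarrow> Y \<in> U"
  unfolding nonprincipal_uf_def by blast

lemma uf_Compl: "nonprincipal_uf U \<Longrightarrow> X \<notin> U \<Longrightarrow> - X \<in> U"
  unfolding nonprincipal_uf_def by blast

lemma uf_Un:
  assumes U: "nonprincipal_uf U" and "X \<union> Y \<in> U"
  shows "X \<in> U \<or> Y \<in> U"
proof (rule ccontr)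
  assume "\<not> (X \<in> U \<or> Y \<in> U)"
  then have "- X \<inter> - Y \<in> U" using U uf_Compl uf_Int by blast
  then have "(X \<union> Y) \<inter> (- X \<inter> - Y) \<in> U" using uf_Int[OF U \<open>X \<union> Y \<in> U\<close>] by blast
  moreover have "(X \<union> Y) \<inter> (- X \<inter> - Y) = {}" by blast
  ultimately show False using U by (simp add: nonprincipal_uf_def)
qed

lemma nonstandard_finite_notin:
  assumes U: "nonprincipal_uf U" and ns: "nonstandard U \<phi>" and F: "finite F"
  shows "{i. \<phi> i \<in> F} \<notin> U"
  using F
proof (induction F rule: finite_induct)
  case empty
  then show ?case using U by (simp add: nonprincipal_uf_def)
next
  case (insert a F)
  have "{i. \<phi> i \<in> insert a F} = {i. \<phi> i = a} \<union> {i. \<phi> i \<in> F}" by auto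
  then show ?case using uf_Un[OF U] insert.IH ns by (metis nonstandard_def)
qed

lemma nonstandard_eventually_greater:
  assumes U: "nonprincipal_uf U" and ns: "nonstandard U \<phi>" and F: "finite F"
  shows "{i. \<forall>j\<in>F. j < \<phi> i} \<in> U"
proof -
  have "finite {x. \<exists>j\<in>F. x \<le> j}"
    using F by (simp add: finite_nat_set_iff_bounded_le) (meson Max_ge order_trans)
  then have "{i. \<phi> i \<in> {x. \<exists>j\<in>F. x \<le> j}} \<notin> U"
    using nonstandard_finite_notin[OF U ns] by blast
  then have "- {i. \<phi> i \<in> {x. \<exists>j\<in>F. x \<le> j}} \<in> U"
    by (rule uf_Compl[OF U])
  then show ?thesis by (rule uf_mono[OF U]) (auto simp: not_le)
qed

lemma stem_unique:
  assumes "is_stem T s" shows "stem T = s"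
  unfolding stem_def
proof (rule the_equality)
  show "is_stem T s" by fact
next
  fix s' assume s': "is_stem T s'"
  have "init_seg s s' \<or> init_seg s' s"
    using assms s' unfolding is_stem_def comparable_all_def by blast
  then show "s' = s"
    using assms s' unfolding is_stem_def by metis
qed

lemma is_stem_stem: "has_stem T \<Longrightarrow> is_stem T (stem T)"
  unfolding has_stem_def using stem_unique by blast

lemma is_stem_if_ext_in_star:
  assumes U: "nonprincipal_uf U" and ns: "nonstandard U \<phi>"
    and fin: "\<forall>t\<in>S. finite t" and r: "r \<in> S" "comparable_all S r"
    and ext: "ext_in_star U \<phi> r S"
  shows "is_stem S r"
  unfolding is_stem_def
proof (intro conjI ballI impI r)
  fix u assume u: "u \<in> S" and u_comp: "comparable_all S u \<and> init_seg r u"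
  show "u = r"
  proof (rule ccontr)
    assume "u \<noteq> r"
    have succ: "{i. r \<union> {\<phi> i} \<in> S} \<in> U" using ext by (simp add: ext_in_star_def)
    have greater: "{i. \<forall>j\<in>r. j < \<phi> i} \<in> U"
      using nonstandard_eventually_greater[OF U ns] fin r by blast
    have "{i. r \<union> {\<phi> i} \<in> S} \<inter> {i. \<forall>j\<in>r. j < \<phi> i} \<subseteq> {i. \<phi> i \<in> u}"
    proof clarify
      fix i assume "r \<union> {\<phi> i} \<in> S" and greater_i: "\<forall>j\<in>r. j < \<phi> i"
      then have "init_seg u (insert (\<phi> i) r) \<or> init_seg (insert (\<phi> i) r) u"
        using u_comp unfolding comparable_all_def by auto
      then show "\<phi> i \<in> u"
      proof
        assume "init_seg u (insert (\<phi> i) r)"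
        then have "init_seg u r \<or> u = insert (\<phi> i) r" by (rule init_seg_insertD[OF greater_i])
        then show ?thesis using u_comp \<open>u \<noteq> r\<close> init_seg_antisym by auto
      next
        assume "init_seg (insert (\<phi> i) r) u"
        then show ?thesis using init_seg_subset by blast
      qed
    qed
    then have "{i. \<phi> i \<in> u} \<in> U" by (rule uf_mono[OF U uf_Int[OF U succ greater]])
    then show False using nonstandard_finite_notin[OF U ns] fin u by blast
  qed
qed

definition pruned_tree :: "nat set set \<Rightarrow> nat set set \<Rightarrow> nat set \<Rightarrow> nat set set" where
  "pruned_tree T H r =
     {t \<in> T. init_seg t r \<or> init_seg r t \<and> (\<forall>u. init_seg r u \<and> init_seg u t \<longrightarrow> u \<in> H)}"

lemma pruned_tree_subset: "pruned_tree T H r \<subseteq> T"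
  by (auto simp: pruned_tree_def)

lemma is_tree_pruned_tree:
  assumes T: "is_tree T" and r: "r \<in> T"
  shows "is_tree (pruned_tree T H r)"
  unfolding is_tree_def
proof (intro conjI ballI allI impI)
  have "init_seg r r" using T r by (simp add: is_tree_def init_seg_refl)
  then have "r \<in> pruned_tree T H r" using r by (simp add: pruned_tree_def)
  then show "pruned_tree T H r \<noteq> {}" by blast
  show "finite t" if "t \<in> pruned_tree T H r" for t
    using that T pruned_tree_subset[of T H r] unfolding is_tree_def by blast
next
  fix t s assume t: "t \<in> pruned_tree T H r" and st: "init_seg s t"
  have sT: "s \<in> T" using T t st by (auto simp: is_tree_def pruned_tree_def)
  from t have "init_seg t r \<or> init_seg r t \<and> (\<forall>u. init_seg r u \<and> init_seg u t \<longrightarrow> u \<in> H)"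
    by (simp add: pruned_tree_def)
  then show "s \<in> pruned_tree T H r"
  proof
    assume "init_seg t r"
    then have "init_seg s r" by (rule init_seg_trans[OF st])
    then show ?thesis using sT by (simp add: pruned_tree_def)
  next
    assume rt: "init_seg r t \<and> (\<forall>u. init_seg r u \<and> init_seg u t \<longrightarrow> u \<in> H)"
    then have "init_seg s r \<or> init_seg r s" using init_seg_linear[OF st] by blast
    moreover have "\<forall>u. init_seg r u \<and> init_seg u s \<longrightarrow> u \<in> H"
      using rt init_seg_trans[OF _ st] by blast
    ultimately show ?thesis using sT by (auto simp: pruned_tree_def)
  qed
qed

lemma tree_above_pruned_tree:
  assumes "r \<in> H"
  shows "tree_above (pruned_tree T H r) r =
    {t \<in> T. init_seg r t \<and> (\<forall>u. init_seg r u \<and> init_seg u t \<longrightarrow> u \<in> H)}"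
  using assms init_seg_antisym by (auto simp: tree_above_def pruned_tree_def)

lemma tree_above_pruned_tree_subset:
  assumes "is_tree T" "r \<in> H"
  shows "tree_above (pruned_tree T H r) r \<subseteq> H"
  using assms init_seg_refl by (auto simp: tree_above_pruned_tree is_tree_def)

lemma insert_mem_tree_above_pruned_tree:
  assumes rH: "r \<in> H" and s: "s \<in> tree_above (pruned_tree T H r) r"
    and "insert x s \<in> T" "insert x s \<in> H" and greater: "\<forall>j\<in>s. j < x" "0 < x"
  shows "insert x s \<in> tree_above (pruned_tree T H r) r"
proof -
  have "init_seg s (insert x s)" using init_seg_insert[OF greater] .
  then show ?thesis
    using assms init_seg_insertD[OF greater(1)] init_seg_trans
    unfolding tree_above_pruned_tree[OF rH] by blast
qed

lemma ext_in_star_pruned_tree: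
  assumes U: "nonprincipal_uf U" and ns: "nonstandard U \<phi>" and T: "is_tree T" and rH: "r \<in> H"
    and s: "s \<in> tree_above (pruned_tree T H r) r"
    and ext_T: "ext_in_star U \<phi> s T" and ext_H: "ext_in_star U \<phi> s H"
  shows "ext_in_star U \<phi> s (pruned_tree T H r)"
proof -
  have "s \<in> T" using s by (simp add: tree_above_def pruned_tree_def)
  then have "finite s" using T by (simp add: is_tree_def)
  then have greater: "{i. \<forall>j\<in>insert 0 s. j < \<phi> i} \<in> U"
    by (intro nonstandard_eventually_greater[OF U ns]) simp
  have in_T: "{i. s \<union> {\<phi> i} \<in> T} \<in> U" and in_H: "{i. s \<union> {\<phi> i} \<in> H} \<in> U"
    using ext_T ext_H by (simp_all add: ext_in_star_def)
  have "{i. s \<union> {\<phi> i} \<in> T} \<inter> {i. s \<union> {\<phi> i} \<in> H} \<inter> {i. \<forall>j\<in>insert 0 s. j < \<phi> i}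
      \<subseteq> {i. s \<union> {\<phi> i} \<in> pruned_tree T H r}"
  proof clarify
    fix i assume "s \<union> {\<phi> i} \<in> T" "s \<union> {\<phi> i} \<in> H" "\<forall>j\<in>insert 0 s. j < \<phi> i"
    then have "insert (\<phi> i) s \<in> tree_above (pruned_tree T H r) r"
      by (intro insert_mem_tree_above_pruned_tree[OF rH s]) simp_all
    then show "s \<union> {\<phi> i} \<in> pruned_tree T H r" by (simp add: tree_above_def)
  qed
  then have "{i. s \<union> {\<phi> i} \<in> pruned_tree T H r} \<in> U"
    by (rule uf_mono[OF U uf_Int[OF U uf_Int[OF U in_T in_H] greater]])
  then show ?thesis by (simp add: ext_in_star_def)
qed

lemma alpha_tree_pruned_tree:
  assumes U: "nonprincipal_uf U" and ns: "\<forall>s. finite s \<longrightarrow> nonstandard U (\<alpha> s)"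
    and ext_H: "\<forall>s\<in>H. ext_in_star U (\<alpha> s) s H"
    and T: "alpha_tree U \<alpha> T" and stem_H: "stem T \<in> H"
  shows "alpha_tree U \<alpha> (pruned_tree T H (stem T)) \<and> stem (pruned_tree T H (stem T)) = stem T"
proof -
  define r where "r = stem T"
  define S where "S = pruned_tree T H r"
  have tree_T: "is_tree T" and stem_T: "is_stem T r"
    and ext_T: "\<forall>s\<in>tree_above T r. ext_in_star U (\<alpha> s) s T"
    using T is_stem_stem by (auto simp: alpha_tree_def r_def)
  have rH: "r \<in> H" using stem_H r_def by simp
  have tree_S: "is_tree S"
    using is_tree_pruned_tree tree_T stem_T by (simp add: S_def is_stem_def)
  have above_S: "r \<in> tree_above S r"
    using stem_T tree_T rH init_seg_refl init_seg_antisym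
    by (auto simp: S_def tree_above_pruned_tree is_stem_def is_tree_def)
  have ext_S: "ext_in_star U (\<alpha> s) s S" if s: "s \<in> tree_above S r" for s
  proof -
    have "nonstandard U (\<alpha> s)" using ns s tree_S by (auto simp: tree_above_def is_tree_def)
    moreover have "ext_in_star U (\<alpha> s) s T"
      using ext_T s pruned_tree_subset[of T H r] by (auto simp: S_def tree_above_def)
    moreover have "ext_in_star U (\<alpha> s) s H"
      using ext_H s tree_above_pruned_tree_subset[OF tree_T rH] by (auto simp: S_def)
    ultimately show ?thesis using ext_in_star_pruned_tree[OF U _ tree_T rH] s by (simp add: S_def)
  qed
  have "is_stem S r"
  proof (rule is_stem_if_ext_in_star[OF U _ _ _ _ ext_S[OF above_S]])
    show "nonstandard U (\<alpha> r)" "\<forall>t\<in>S. finite t" using ns tree_S above_S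
      by (auto simp: is_tree_def tree_above_def)
    show "r \<in> S" "comparable_all S r"
      using above_S stem_T pruned_tree_subset[of T H r]
      by (auto simp: S_def tree_above_def is_stem_def comparable_all_def)
  qed
  then have "stem S = r" by (rule stem_unique)
  then show ?thesis
    using tree_S \<open>is_stem S r\<close> above_S ext_S
    by (auto simp: alpha_tree_def has_stem_def S_def r_def)
qed

theorem mainTheorem17:
  fixes U :: "nat set set" and \<alpha> :: "nat set \<Rightarrow> nat \<Rightarrow> nat"
    and H T :: "nat set set"
  assumes "nonprincipal_uf U"
    and "\<forall>s. finite s \<longrightarrow> nonstandard U (\<alpha> s)"
    and "\<forall>s\<in>H. finite s"
    and "\<forall>s\<in>H. ext_in_star U (\<alpha> s) s H"
    and "alpha_tree U \<alpha> T"
    and "stem T \<in> H"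
  shows "\<exists>S. S \<subseteq> T \<and> alpha_tree U \<alpha> S \<and> stem S = stem T \<and> tree_above S (stem S) \<subseteq> H"
proof (intro exI conjI)
  let ?S = "pruned_tree T H (stem T)"
  show "?S \<subseteq> T" by (rule pruned_tree_subset)
  have "alpha_tree U \<alpha> ?S \<and> stem ?S = stem T"
    by (rule alpha_tree_pruned_tree[OF assms(1,2,4-6)])
  then show "alpha_tree U \<alpha> ?S" and stem: "stem ?S = stem T" by simp_all
  have "is_tree T" using assms(5) by (simp add: alpha_tree_def)
  then show "tree_above ?S (stem ?S) \<subseteq> H"
    unfolding stem by (rule tree_above_pruned_tree_subset[OF _ assms(6)])
qed

end
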